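(* Let $g,h$ be relatively prime divisors of $N$ and $\chi\in X_N$, $\psi=\theta\chi^{-1}$. Then the eigensymbol $\alpha^{g,h}_{\chi,\psi}$ is zero unless $f_\chi$ divides $N/g$ and $f_\psi$ divides $N/h$.
   Context: $p$ is an odd prime, $M$ a positive integer with $p\nmid M\varphi(M)$, $N=M$ or $Mp$, $N>1$, $\Delta=(\mathbb{Z}/N\mathbb{Z})^\times/\langle-1\rangle$. $H$ is a space of level $N$ modular symbols: a $\mathbb{Z}_p[\Delta]$-module spanned by symbols $[u:v]$ ($u,v\in\mathbb{Z}/N\mathbb{Z}$ generating the unit ideal) satisfying $[u:v]=[-u:-v]=-[-v:u]$, $[u:v]=[u:u+v]+[u+v:v]$, $\langle a\rangle[u:v]=[au:av]$. $\theta:\Delta\to\mathbb{C}_p^\times$ is a character, $\mathcal{O}=\mathbb{Z}_p[\mu_{\varphi(N)}]$, $X_N=\mathrm{Hom}((\mathbb{Z}/N\mathbb{Z})^\times,\mathcal{O}^\times)$, $e_\theta=\frac1{\varphi(N)}\sum_a\theta^{-1}(a)\langle a\rangle$, $H^\theta=e_\theta(H\otimes_{\mathbb{Z}_p}\mathcal{O})$. $\alpha^{g,h}_{\chi,\psi}=\frac{1}{\varphi(N)^2}\sum_{a,b\in(\mathbb{Z}/N\mathbb{Z})^\times}\chi^{-1}(a)\psi^{-1}(b)[ga:hb]$. $f_\chi$ denotes the conductor of $\chi$. *)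

theory Defs
  imports "HOL-Number_Theory.Number_Theory"
begin

text \<open>Residues mod N are represented by integers; (Z/NZ)^x by the set of representatives
  in {0..<N} coprime to N.\<close>

definition units_mod :: "nat \<Rightarrow> int set" where
  "units_mod N = {a \<in> {0..<int N}. coprime a (int N)}"

text \<open>Inverse of a residue class mod N (meaningful for units).\<close>
definition res_inv :: "nat \<Rightarrow> int \<Rightarrow> int" where
  "res_inv N a = (SOME b. [a * b = 1] (mod int N))"

text \<open>Multiplicative inverse in a ring (meaningful for units).\<close>
definition ring_inv :: "'o::comm_ring_1 \<Rightarrow> 'o" where
  "ring_inv x = (SOME y. y * x = 1)"

text \<open>A Dirichlet character mod N with values in O^x, i.e. an element of
  X_N = Hom((Z/NZ)^x, O^x), viewed as a function on integers (values on non-units irrelevant).\<close>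
definition is_char :: "nat \<Rightarrow> (int \<Rightarrow> 'o::comm_ring_1) \<Rightarrow> bool" where
  "is_char N \<chi> \<longleftrightarrow>
     (\<forall>a b. [a = b] (mod int N) \<longrightarrow> \<chi> a = \<chi> b) \<and>
     (\<forall>a b. coprime a (int N) \<longrightarrow> coprime b (int N) \<longrightarrow> \<chi> (a * b) = \<chi> a * \<chi> b) \<and>
     (\<forall>a. coprime a (int N) \<longrightarrow> \<chi> a dvd 1)"

definition char_inv :: "nat \<Rightarrow> (int \<Rightarrow> 'o::comm_ring_1) \<Rightarrow> int \<Rightarrow> 'o" where
  "char_inv N \<chi> a = \<chi> (res_inv N a)"

definition conductor :: "nat \<Rightarrow> (int \<Rightarrow> 'o::comm_ring_1) \<Rightarrow> nat" where
  "conductor N \<chi> = (LEAST f. 0 < f \<and> f dvd N \<and>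
      (\<forall>a. coprime a (int N) \<and> [a = 1] (mod int f) \<longrightarrow> \<chi> a = 1))"

definition eigensym ::
  "('o::comm_ring_1 \<Rightarrow> 'h::ab_group_add \<Rightarrow> 'h) \<Rightarrow> (int \<Rightarrow> int \<Rightarrow> 'h) \<Rightarrow> nat \<Rightarrow> nat \<Rightarrow> nat
     \<Rightarrow> (int \<Rightarrow> 'o) \<Rightarrow> (int \<Rightarrow> 'o) \<Rightarrow> 'h" where
  "eigensym scale msym N g h \<chi> \<psi> =
     scale (ring_inv (of_nat (totient N) ^ 2))
       (\<Sum>a\<in>units_mod N. \<Sum>b\<in>units_mod N.
          scale (char_inv N \<chi> a * char_inv N \<psi> b) (msym (int g * a) (int h * b)))"

text \<open>Pairs (u,v) in Z/NZ generating the unit ideal.\<close>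
definition unimod :: "nat \<Rightarrow> int \<Rightarrow> int \<Rightarrow> bool" where
  "unimod N u v \<longleftrightarrow> gcd (gcd u v) (int N) = 1"

end

theory Submission
  imports Defs
begin

text \<open>If w is a unit with w \<equiv> 1 (mod N/g), then g a w \<equiv> g a (mod N), so substituting
  a \<mapsto> a w^-1 in the sum over a multiplies the eigensymbol by \<chi>(w). Now \<chi>(w) is a
  \<phi>(N)-th root of unity, \<phi>(N) is prime to p and pO is the maximal ideal of O, so
  1 - \<chi>(w) is a unit unless \<chi>(w) = 1. Hence a nonzero eigensymbol forces \<chi> to be trivial on
  the units \<equiv> 1 (mod N/g), i.e. f_\<chi> | N/g; the moduli on which a character is trivial are
  closed under gcd, which is what makes "least" in the definition of the conductor mean
  "divides". The same argument in the second variable gives f_\<psi> | N/h.\<close>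

lemma exists_coprime_add_mult:
  fixes x m N :: int
  assumes "coprime x m" and "N \<noteq> 0"
  shows "\<exists>t. coprime (x + m * t) N"
proof -
  define Q where "Q = {q \<in> prime_factors N. \<not> q dvd x}"
  have fin: "finite Q"
    unfolding Q_def by simp
  have "coprime (x + m * \<Prod>Q) N"
  proof (rule ccontr)
    assume "\<not> coprime (x + m * \<Prod>Q) N"
    then obtain c where c: "c dvd x + m * \<Prod>Q" "c dvd N" "\<not> is_unit c"
      by (rule not_coprimeE)
    moreover have "c \<noteq> 0"
      using c(2) assms(2) by auto
    ultimately obtain q where q: "prime q" "q dvd x + m * \<Prod>Q" "q dvd N"
      using prime_divisor_exists[of c] by (meson dvd_trans)
    have "q \<in> prime_factors N"
      using q assms(2) by (simp add: in_prime_factors_iff prime_ge_0_int)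
    show False
    proof (cases "q dvd x")
      case True
      have "\<not> q dvd m"
        using True assms(1) q(1) by (meson coprime_common_divisor not_prime_unit)
      moreover have "\<not> q dvd \<Prod>Q"
      proof
        assume "q dvd \<Prod>Q"
        then obtain r where r: "r \<in> Q" "q dvd r"
          using prime_dvd_prod_iff[OF fin q(1)] by auto
        then have "q = r"
          using q(1) unfolding Q_def
          by (auto intro: primes_dvd_imp_eq simp: prime_ge_0_int in_prime_factors_iff)
        then show False
          using r(1) True unfolding Q_def by simp
      qed
      ultimately have "\<not> q dvd m * \<Prod>Q"
        using q(1) prime_dvd_mult_iff by blast
      then show False
        using q(2) True by (simp add: dvd_add_right_iff)
    next
      case False
      with \<open>q \<in> prime_factors N\<close> have "q \<in> Q"
        unfolding Q_def by simp
      then have "q dvd m * \<Prod>Q"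
        using dvd_prodI[OF fin, of q "\<lambda>x. x"] by simp
      then show False
        using q(2) False by (simp add: dvd_add_left_iff)
    qed
  qed
  then show ?thesis by blast
qed

lemma cong_inverse_unique:
  fixes x r r' :: int
  assumes "[x * r = 1] (mod n)" and "[x * r' = 1] (mod n)"
  shows "[r = r'] (mod n)"
proof -
  have "[r * (x * r') = r * 1] (mod n)"
    using assms(2) by (rule cong_scalar_left)
  moreover have "[(x * r) * r' = 1 * r'] (mod n)"
    using assms(1) by (rule cong_scalar_right)
  ultimately show ?thesis
    by (metis cong_sym cong_trans mult.assoc mult.commute mult_1)
qed

lemma res_inv: "coprime x (int N) \<Longrightarrow> [x * res_inv N x = 1] (mod int N)"
  unfolding res_inv_def by (rule someI_ex) (rule cong_solve_coprime_int)

lemma coprime_res_inv: "coprime x (int N) \<Longrightarrow> coprime (res_inv N x) (int N)"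
  by (metis res_inv cong_imp_coprime cong_sym coprime_1_left coprime_mult_left_iff)

lemma res_inv_cong: "[x = x'] (mod int N) \<Longrightarrow> res_inv N x = res_inv N x'"
  unfolding res_inv_def by (metis cong_scalar_right cong_sym cong_trans)

lemma res_inv_res_inv: "coprime x (int N) \<Longrightarrow> [res_inv N (res_inv N x) = x] (mod int N)"
  by (metis cong_inverse_unique coprime_res_inv res_inv mult.commute)

lemma res_inv_mult:
  assumes "coprime a (int N)" and "coprime b (int N)"
  shows "[res_inv N (a * b) = res_inv N a * res_inv N b] (mod int N)"
proof (rule cong_inverse_unique)
  show "[a * b * res_inv N (a * b) = 1] (mod int N)"
    using assms by (simp add: res_inv)
  have "[(a * res_inv N a) * (b * res_inv N b) = 1 * 1] (mod int N)"
    using assms by (intro cong_mult res_inv)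
  then show "[a * b * (res_inv N a * res_inv N b) = 1] (mod int N)"
    by (simp add: ac_simps)
qed

lemma is_char_cong: "is_char N \<chi> \<Longrightarrow> [a = b] (mod int N) \<Longrightarrow> \<chi> a = \<chi> b"
  unfolding is_char_def by blast

lemma is_char_mult:
  "is_char N \<chi> \<Longrightarrow> coprime a (int N) \<Longrightarrow> coprime b (int N) \<Longrightarrow> \<chi> (a * b) = \<chi> a * \<chi> b"
  unfolding is_char_def by blast

lemma is_char_unit: "is_char N \<chi> \<Longrightarrow> coprime a (int N) \<Longrightarrow> \<chi> a dvd 1"
  unfolding is_char_def by blast

lemma is_char_one:
  assumes "is_char N \<chi>"
  shows "\<chi> 1 = 1"
proof -
  have idem: "\<chi> 1 * \<chi> 1 = \<chi> 1"
    using is_char_mult[OF assms, of 1 1] by simp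
  have "\<chi> 1 dvd 1"
    using is_char_unit[OF assms, of 1] by simp
  then obtain v where v: "1 = \<chi> 1 * v" ..
  have "\<chi> 1 = \<chi> 1 * (\<chi> 1 * v)"
    using v by simp
  also have "\<dots> = 1"
    using idem v by (metis mult.assoc)
  finally show ?thesis .
qed

lemma is_char_power:
  assumes "is_char N \<chi>" and "coprime w (int N)"
  shows "\<chi> (w ^ k) = \<chi> w ^ k"
proof (induction k)
  case (Suc k)
  then show ?case
    using assms by (simp add: is_char_mult)
qed (simp add: is_char_one[OF assms(1)])

lemma is_char_root_of_unity:
  assumes "is_char N \<chi>" and "coprime w (int N)" and "1 < N"
  shows "\<chi> w ^ totient N = 1"
proof -
  have "residues (int N)"
    using assms(3) by (simp add: residues_def)
  then have "[w ^ totient N = 1] (mod int N)"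
    using residues.euler_theorem[of "int N" w] assms(2) by simp
  then show ?thesis
    using assms by (metis is_char_cong is_char_one is_char_power)
qed

lemma char_inv_cong: "[a = b] (mod int N) \<Longrightarrow> char_inv N \<chi> a = char_inv N \<chi> b"
  unfolding char_inv_def by (simp add: res_inv_cong)

lemma char_inv_mult:
  assumes "is_char N \<chi>" and "coprime a (int N)" and "coprime b (int N)"
  shows "char_inv N \<chi> (a * b) = char_inv N \<chi> a * char_inv N \<chi> b"
proof -
  have "\<chi> (res_inv N (a * b)) = \<chi> (res_inv N a * res_inv N b)"
    using assms res_inv_mult[of a N b] by (blast intro: is_char_cong)
  then show ?thesis
    unfolding char_inv_def using assms by (simp add: coprime_res_inv is_char_mult)
qed

lemma char_inv_res_inv: "is_char N \<chi> \<Longrightarrow> coprime a (int N) \<Longrightarrow> char_inv N \<chi> (res_inv N a) = \<chi> a"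
  unfolding char_inv_def by (blast intro: is_char_cong res_inv_res_inv)

lemma is_char_mult_char_inv:
  assumes "is_char N \<theta>" and "is_char N \<chi>"
  shows "is_char N (\<lambda>b. \<theta> b * char_inv N \<chi> b)"
  unfolding is_char_def
proof (intro conjI allI impI)
  fix a b :: int
  show "[a = b] (mod int N) \<Longrightarrow> \<theta> a * char_inv N \<chi> a = \<theta> b * char_inv N \<chi> b"
    using assms(1) by (metis is_char_cong char_inv_cong)
  show "coprime a (int N) \<Longrightarrow> coprime b (int N) \<Longrightarrow>
      \<theta> (a * b) * char_inv N \<chi> (a * b) = \<theta> a * char_inv N \<chi> a * (\<theta> b * char_inv N \<chi> b)"
    using assms by (simp add: is_char_mult char_inv_mult ac_simps)
next
  fix a :: int
  assume "coprime a (int N)"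
  then show "\<theta> a * char_inv N \<chi> a dvd 1"
    using is_char_unit[OF assms(1)] is_char_unit[OF assms(2) coprime_res_inv]
    unfolding char_inv_def by (metis mult_dvd_mono mult_1)
qed

definition char_trivial_mod :: "nat \<Rightarrow> (int \<Rightarrow> 'o::comm_ring_1) \<Rightarrow> nat \<Rightarrow> bool" where
  "char_trivial_mod N \<chi> f \<longleftrightarrow> (\<forall>a. coprime a (int N) \<and> [a = 1] (mod int f) \<longrightarrow> \<chi> a = 1)"

lemma exists_coprime_cong_cong:
  fixes a f d N :: int
  assumes "coprime a N" and "d dvd N" and "N \<noteq> 0" and "[a = 1] (mod gcd f d)"
  shows "\<exists>x. coprime x N \<and> [x = 1] (mod f) \<and> [x = a] (mod d)"
proof -
  obtain k where k: "a = 1 + gcd f d * k"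
    using assms(4) by (metis cong_iff_lin cong_sym)
  obtain s t where st: "s * f + t * d = gcd f d"
    using bezout_int by blast
  define x0 where "x0 = 1 + k * s * f"
  have x0_f: "[x0 = 1] (mod f)"
    unfolding x0_def by (simp add: cong_iff_dvd_diff)
  have x0_d: "[x0 = a] (mod d)"
    unfolding x0_def k st[symmetric] by (simp add: cong_iff_dvd_diff algebra_simps)
  have "coprime x0 f"
    using x0_f by (metis cong_imp_coprime cong_sym coprime_1_left)
  moreover have "coprime x0 d"
    using x0_d assms(1,2) by (metis cong_imp_coprime cong_sym coprime_divisors dvd_refl)
  ultimately obtain t' where t': "coprime (x0 + f * d * t') N"
    using exists_coprime_add_mult[of x0 "f * d" N] assms(3) by auto
  have "[x0 + f * d * t' = x0] (mod f)" "[x0 + f * d * t' = x0] (mod d)"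
    by (simp_all add: cong_iff_dvd_diff)
  then show ?thesis
    using t' x0_f x0_d by (meson cong_trans)
qed

lemma char_trivial_mod_gcd:
  assumes \<chi>: "is_char N \<chi>" and "N \<noteq> 0" and "d dvd N"
    and f_triv: "char_trivial_mod N \<chi> f" and d_triv: "char_trivial_mod N \<chi> d"
  shows "char_trivial_mod N \<chi> (gcd f d)"
  unfolding char_trivial_mod_def
proof (intro allI impI, elim conjE)
  fix a
  assume a: "coprime a (int N)" "[a = 1] (mod int (gcd f d))"
  obtain x where x: "coprime x (int N)" "[x = 1] (mod int f)" "[x = a] (mod int d)"
    using exists_coprime_cong_cong[of a "int N" "int d" "int f"] a assms(2,3) by auto
  define z where "z = a * res_inv N x"
  have z: "coprime z (int N)"
    unfolding z_def using a(1) x(1) by (simp add: coprime_res_inv)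
  have "[x * res_inv N x = 1] (mod int d)"
    using res_inv[OF x(1)] assms(3) by (simp add: cong_dvd_modulus)
  moreover have "[x * res_inv N x = z] (mod int d)"
    unfolding z_def using x(3) by (rule cong_scalar_right)
  ultimately have "[z = 1] (mod int d)"
    by (meson cong_sym cong_trans)
  have "[x * z = a * 1] (mod int N)"
    unfolding z_def using res_inv[OF x(1)]
    by (metis cong_scalar_left mult.left_commute)
  then have "\<chi> a = \<chi> x * \<chi> z"
    using \<chi> x(1) z by (metis is_char_cong is_char_mult mult_1_right)
  also have "\<dots> = 1"
    using f_triv d_triv x z \<open>[z = 1] (mod int d)\<close> unfolding char_trivial_mod_def by simp
  finally show "\<chi> a = 1" .
qed

lemma conductor_dvd:
  assumes \<chi>: "is_char N \<chi>" and "0 < N" and "d dvd N" and "char_trivial_mod N \<chi> d"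
  shows "conductor N \<chi> dvd d"
proof -
  define P where "P f \<longleftrightarrow> 0 < f \<and> f dvd N \<and> char_trivial_mod N \<chi> f" for f
  have conductor: "conductor N \<chi> = (LEAST f. P f)"
    unfolding conductor_def P_def char_trivial_mod_def ..
  have "P d"
    unfolding P_def using assms by (auto intro: Nat.gr0I)
  then have P_conductor: "P (conductor N \<chi>)"
    unfolding conductor by (rule LeastI)
  then have "P (gcd (conductor N \<chi>) d)"
    unfolding P_def using assms by (auto intro: char_trivial_mod_gcd dvd_trans)
  then have "conductor N \<chi> \<le> gcd (conductor N \<chi>) d"
    unfolding conductor by (rule Least_le)
  then have "gcd (conductor N \<chi>) d = conductor N \<chi>"
    using P_conductor unfolding P_def by (simp add: le_antisym)
  then show ?thesis
    by (metis gcd_dvd2)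
qed

lemma mod_in_units_mod: "coprime x (int N) \<Longrightarrow> 0 < N \<Longrightarrow> x mod int N \<in> units_mod N"
  unfolding units_mod_def by simp

lemma units_mod_cancel:
  assumes "a \<in> units_mod N" and "[u * v = 1] (mod int N)"
  shows "(a * u mod int N) * v mod int N = a"
proof -
  have "[(a * u mod int N) * v = a * (u * v)] (mod int N)"
    unfolding cong_def mod_mult_left_eq by (simp add: mult.assoc)
  also have "[a * (u * v) = a * 1] (mod int N)"
    using assms(2) by (rule cong_scalar_left)
  finally show ?thesis
    using assms(1) unfolding units_mod_def cong_def by simp
qed

lemma bij_betw_mult_units_mod:
  assumes "coprime u (int N)"
  shows "bij_betw (\<lambda>a. a * u mod int N) (units_mod N) (units_mod N)"
proof (rule bij_betw_byWitness[where f' = "\<lambda>a. a * res_inv N u mod int N"])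
  have N: "0 < N" if "a \<in> units_mod N" for a
    using that unfolding units_mod_def by auto
  have "[u * res_inv N u = 1] (mod int N)" "[res_inv N u * u = 1] (mod int N)"
    using res_inv[OF assms] by (simp_all add: mult.commute)
  then show "\<forall>a\<in>units_mod N. a * u mod int N * res_inv N u mod int N = a"
    "\<forall>a\<in>units_mod N. a * res_inv N u mod int N * u mod int N = a"
    by (simp_all add: units_mod_cancel)
  show "(\<lambda>a. a * u mod int N) ` units_mod N \<subseteq> units_mod N"
    "(\<lambda>a. a * res_inv N u mod int N) ` units_mod N \<subseteq> units_mod N"
    using assms N by (auto intro!: mod_in_units_mod simp: units_mod_def coprime_res_inv)
qed

lemma (in Modules.module) eq_0_if_scale_eq_self:
  assumes "(1 - c) dvd 1" and "c *s x = x"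
  shows "x = 0"
proof -
  obtain v where v: "1 = (1 - c) * v"
    using assms(1) by (rule dvdE)
  have "(1 - c) *s x = 0"
    using assms(2) by (simp add: scale_left_diff_distrib)
  then have "(v * (1 - c)) *s x = 0"
    by (metis scale_scale scale_zero_right)
  then show ?thesis
    using v by (simp add: mult.commute)
qed

lemma twisted_sum_shift:
  fixes scale :: "'o::comm_ring_1 \<Rightarrow> 'h::ab_group_add \<Rightarrow> 'h" and \<xi> :: "int \<Rightarrow> 'o"
    and \<Phi> :: "int \<Rightarrow> 'h"
  assumes "Modules.module scale" and \<xi>: "is_char N \<xi>" and g: "g dvd N"
    and \<Phi>: "\<And>x y. [x = y] (mod int N) \<Longrightarrow> \<Phi> x = \<Phi> y"
    and w: "coprime w (int N)" "[w = 1] (mod int (N div g))"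
  defines "T \<equiv> \<Sum>a\<in>units_mod N. scale (char_inv N \<xi> a) (\<Phi> (int g * a))"
  shows "scale (\<xi> w) T = T"
proof -
  interpret Modules.module scale by fact
  define u where "u = res_inv N w"
  have u: "coprime u (int N)"
    unfolding u_def using w(1) by (rule coprime_res_inv)
  have "int (N div g) dvd int N"
    using g by (metis dvd_mult_div_cancel dvd_triv_right of_nat_dvd_iff)
  then have "[w * u = 1] (mod int (N div g))"
    unfolding u_def using res_inv[OF w(1)] by (auto intro: cong_dvd_modulus)
  moreover have "[w * u = 1 * u] (mod int (N div g))"
    using w(2) by (rule cong_scalar_right)
  ultimately have u_1: "[u = 1] (mod int (N div g))"
    by (metis cong_sym cong_trans mult_1)
  have shift: "scale (char_inv N \<xi> (a * u mod int N)) (\<Phi> (int g * (a * u mod int N))) =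
      scale (\<xi> w) (scale (char_inv N \<xi> a) (\<Phi> (int g * a)))"
    if a: "a \<in> units_mod N" for a
  proof -
    have a_N: "coprime a (int N)"
      using a unfolding units_mod_def by simp
    have "char_inv N \<xi> (a * u mod int N) = char_inv N \<xi> (a * u)"
      by (rule char_inv_cong) (simp add: cong_def)
    also have "\<dots> = char_inv N \<xi> a * \<xi> w"
      using \<xi> a_N u w(1) unfolding u_def by (simp add: char_inv_mult char_inv_res_inv)
    finally have char: "char_inv N \<xi> (a * u mod int N) = char_inv N \<xi> a * \<xi> w" .
    have "[int g * (a * u mod int N) = int g * a] (mod int N)"
    proof -
      obtain k where "u = 1 + int (N div g) * k"
        using u_1 by (metis cong_iff_lin cong_sym)
      moreover have "int N = int g * int (N div g)"
        using g by (metis dvd_mult_div_cancel of_nat_mult)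
      ultimately have expand: "int g * (a * u) = int g * a + int N * (a * k)"
        by (simp add: algebra_simps)
      have "[int g * (a * u mod int N) = int g * (a * u)] (mod int N)"
        by (intro cong_scalar_left) (simp add: cong_def)
      also have "[int g * (a * u) = int g * a] (mod int N)"
        unfolding expand by (simp add: cong_def)
      finally show ?thesis .
    qed
    then have "\<Phi> (int g * (a * u mod int N)) = \<Phi> (int g * a)"
      by (rule \<Phi>)
    then show ?thesis
      by (simp add: char mult.commute)
  qed
  have "T = (\<Sum>a\<in>units_mod N.
      scale (char_inv N \<xi> (a * u mod int N)) (\<Phi> (int g * (a * u mod int N))))"
    unfolding T_def by (rule sum.reindex_bij_betw[OF bij_betw_mult_units_mod[OF u], symmetric])
  also have "\<dots> = scale (\<xi> w) T"
    unfolding T_def by (simp add: shift scale_sum_right)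
  finally show ?thesis ..
qed

text \<open>If p divided 1 - c, it would divide every 1 - c^k and hence their sum
  n - (1 + c + \<dots> + c^(n-1)) = n.\<close>
lemma one_minus_root_of_unity_dvd_one:
  fixes c :: "'o::idom" and p n :: nat
  assumes p_nonunit: "\<not> (of_nat p :: 'o) dvd 1" and local: "\<forall>x::'o. x dvd 1 \<or> of_nat p dvd x"
    and "c ^ n = 1" and "c \<noteq> 1" and "coprime p n"
  shows "(1 - c) dvd 1"
proof (rule ccontr)
  assume "\<not> (1 - c) dvd 1"
  then have p_dvd: "of_nat p dvd (1 - c)"
    using local by blast
  have "(1 - c) * (\<Sum>k<n. c ^ k) = 0"
    using one_diff_power_eq[of c n] assms(3) by simp
  then have geometric: "(\<Sum>k<n. c ^ k) = 0"
    using assms(4) by simp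
  have "of_nat p dvd (\<Sum>k<n. 1 - c ^ k)"
    using p_dvd one_diff_power_eq[of c] by (auto intro!: dvd_sum dvd_mult2)
  also have "(\<Sum>k<n. 1 - c ^ k) = of_nat n"
    using geometric by (simp add: sum_subtractf)
  finally have "of_nat p dvd (of_nat n :: 'o)" .
  moreover obtain u v where "u * int p + v * int n = 1"
    using bezout_int[of "int p" "int n"] assms(5) by auto
  then have "of_int u * of_nat p + of_int v * of_nat n = (1 :: 'o)"
    by (metis of_int_1 of_int_add of_int_mult of_int_of_nat_eq)
  ultimately show False
    using p_nonunit by (metis dvd_add dvd_mult dvd_refl)
qed

lemma coprime_prime_totient:
  fixes p M N :: nat
  assumes "prime p" and "\<not> p dvd M * totient M" and "N = M \<or> N = M * p"
  shows "coprime p (totient N)"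
proof -
  have "\<not> p dvd totient (M * p)"
  proof -
    have "coprime M p"
      using assms(1,2) by (metis coprime_commute dvd_mult2 prime_imp_coprime)
    then have "totient (M * p) = totient M * (p - 1)"
      using assms(1) by (simp add: totient_mult_coprime totient_prime)
    moreover have "\<not> p dvd p - 1"
      using assms(1) by (metis dvd_diffD1 dvd_refl nat_dvd_1_iff_1 not_prime_1 prime_ge_1_nat)
    ultimately show ?thesis
      using assms(1,2) by (simp add: prime_dvd_mult_iff)
  qed
  then show ?thesis
    using assms by (auto simp: prime_imp_coprime prime_dvd_mult_iff)
qed

lemma conductor_dvd_if_twisted_sum_nonzero:
  fixes scale :: "'o::comm_ring_1 \<Rightarrow> 'h::ab_group_add \<Rightarrow> 'h" and \<xi> :: "int \<Rightarrow> 'o"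
    and \<Phi> :: "int \<Rightarrow> 'h"
  assumes module: "Modules.module scale" and "0 < N" and \<xi>: "is_char N \<xi>" and g: "g dvd N"
    and \<Phi>: "\<And>x y. [x = y] (mod int N) \<Longrightarrow> \<Phi> x = \<Phi> y"
    and unit: "\<And>w. coprime w (int N) \<Longrightarrow> \<xi> w \<noteq> 1 \<Longrightarrow> (1 - \<xi> w) dvd 1"
    and nonzero: "(\<Sum>a\<in>units_mod N. scale (char_inv N \<xi> a) (\<Phi> (int g * a))) \<noteq> 0"
  shows "conductor N \<xi> dvd N div g"
proof (rule conductor_dvd[OF \<xi> \<open>0 < N\<close>])
  interpret Modules.module scale by fact
  show "N div g dvd N"
    using g by (metis dvd_mult_div_cancel dvd_triv_right)
  show "char_trivial_mod N \<xi> (N div g)"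
    unfolding char_trivial_mod_def
  proof (intro allI impI, elim conjE)
    fix w
    assume w: "coprime w (int N)" "[w = 1] (mod int (N div g))"
    show "\<xi> w = 1"
    proof (rule ccontr)
      assume "\<xi> w \<noteq> 1"
      then show False
        using eq_0_if_scale_eq_self[OF unit[OF w(1)]]
          twisted_sum_shift[where \<Phi> = \<Phi>, OF module \<xi> g \<Phi> w] nonzero by blast
    qed
  qed
qed

theorem lemma2p9:
  fixes p M N g h :: nat
    and scale :: "'o::idom \<Rightarrow> 'h::ab_group_add \<Rightarrow> 'h"
    and msym :: "int \<Rightarrow> int \<Rightarrow> 'h"
    and dia :: "int \<Rightarrow> 'h \<Rightarrow> 'h"
    and \<theta> \<chi> :: "int \<Rightarrow> 'o"
  assumes p: "prime p" "odd p"
    and M: "0 < M" "\<not> p dvd M * totient M"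
    and N: "N = M \<or> N = M * p" "1 < N"
    \<comment> \<open>O = Z_p[mu_phi(N)]: a local domain with maximal ideal pO containing phi(N) distinct
        phi(N)-th roots of unity\<close>
    and O_local: "\<not> (of_nat p :: 'o) dvd 1" "\<forall>x::'o. x dvd 1 \<or> of_nat p dvd x"
    and O_mu: "card {z::'o. z ^ totient N = 1} = totient N"
    \<comment> \<open>H tensor O: an O-module spanned by symbols [u:v] satisfying the relations\<close>
    and H_mod: "Modules.module scale"
    and sym_periodic: "\<forall>u v u' v'. [u = u'] (mod int N) \<longrightarrow> [v = v'] (mod int N) \<longrightarrow> msym u v = msym u' v'"
    and sym_rel1: "\<forall>u v. unimod N u v \<longrightarrow> msym u v = msym (-u) (-v)"
    and sym_rel2: "\<forall>u v. unimod N u v \<longrightarrow> msym u v = - msym (-v) u"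
    and sym_rel3: "\<forall>u v. unimod N u v \<longrightarrow> msym u v = msym u (u + v) + msym (u + v) v"
    and H_span: "Modules.module.span scale {msym u v | u v. unimod N u v} = UNIV"
    and dia_lin: "\<forall>a. coprime a (int N) \<longrightarrow>
        (\<forall>x y. dia a (x + y) = dia a x + dia a y) \<and> (\<forall>c x. dia a (scale c x) = scale c (dia a x))"
    and dia_sym: "\<forall>a u v. coprime a (int N) \<longrightarrow> unimod N u v \<longrightarrow> dia a (msym u v) = msym (a * u) (a * v)"
    \<comment> \<open>theta: a character of Delta = (Z/NZ)^x/<-1>\<close>
    and theta: "is_char N \<theta>" "\<theta> (-1) = 1"
    and chi: "is_char N \<chi>"
    and gh: "g dvd N" "h dvd N" "coprime g h"
  shows "eigensym scale msym N g h \<chi> (\<lambda>b. \<theta> b * char_inv N \<chi> b) \<noteq> 0 \<longrightarrow>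
           conductor N \<chi> dvd N div g \<and> conductor N (\<lambda>b. \<theta> b * char_inv N \<chi> b) dvd N div h"
proof
  define \<psi> where "\<psi> = (\<lambda>b. \<theta> b * char_inv N \<chi> b)"
  interpret Modules.module scale by (rule H_mod)
  have msym_cong: "msym u v = msym u' v'" if "[u = u'] (mod int N)" "[v = v'] (mod int N)" for u v u' v'
    using sym_periodic that by blast
  define S where "S = (\<Sum>a\<in>units_mod N. \<Sum>b\<in>units_mod N.
      scale (char_inv N \<chi> a * char_inv N \<psi> b) (msym (int g * a) (int h * b)))"
  assume "eigensym scale msym N g h \<chi> \<psi> \<noteq> 0"
  then have "S \<noteq> 0"
    unfolding eigensym_def S_def by auto
  have \<psi>: "is_char N \<psi>"
    unfolding \<psi>_def using theta(1) chi by (rule is_char_mult_char_inv)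
  have unit: "(1 - \<xi> w) dvd 1" if "is_char N \<xi>" "coprime w (int N)" "\<xi> w \<noteq> 1"
    for \<xi> :: "int \<Rightarrow> 'o" and w
    using one_minus_root_of_unity_dvd_one[OF O_local is_char_root_of_unity[OF that(1,2) N(2)] that(3)
        coprime_prime_totient[OF p(1) M(2) N(1)]] .
  have "S = (\<Sum>a\<in>units_mod N. scale (char_inv N \<chi> a)
      (\<Sum>b\<in>units_mod N. scale (char_inv N \<psi> b) (msym (int g * a) (int h * b))))"
    unfolding S_def by (simp add: scale_sum_right)
  then have "conductor N \<chi> dvd N div g"
    using \<open>S \<noteq> 0\<close> unit[OF chi] N(2)
    by (intro conductor_dvd_if_twisted_sum_nonzero[OF H_mod _ chi gh(1)])
      (auto intro!: sum.cong arg_cong[where f = "scale _"] msym_cong)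
  moreover have "S = (\<Sum>b\<in>units_mod N. scale (char_inv N \<psi> b)
      (\<Sum>a\<in>units_mod N. scale (char_inv N \<chi> a) (msym (int g * a) (int h * b))))"
    unfolding S_def by (subst sum.swap) (simp add: scale_sum_right mult.commute)
  then have "conductor N \<psi> dvd N div h"
    using \<open>S \<noteq> 0\<close> unit[OF \<psi>] N(2)
    by (intro conductor_dvd_if_twisted_sum_nonzero[OF H_mod _ \<psi> gh(2)])
      (auto intro!: sum.cong arg_cong[where f = "scale _"] msym_cong)
  ultimately show "conductor N \<chi> dvd N div g \<and> conductor N \<psi> dvd N div h" ..
qed

end
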